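(* Let $G$ be a finite simple graph with $\tau(G) > 2\nu(G)$ such that every proper subgraph $H$ of $G$ satisfies $\tau(H) \leq 2\nu(H)$ (a minimal counterexample to Tuza's Conjecture). Then $G$ is robust.
   Context: $\nu(G)$ is the maximum number of pairwise edge-disjoint triangles in $G$; $\tau(G)$ is the minimum size of an edge set $Y$ with $G-Y$ triangle-free. A graph $G$ is robust if for every $v \in V(G)$, every connected component of the induced subgraph $G[N(v)]$ on the neighborhood of $v$ has at least $5$ vertices. *)

theory Defs
  imports Main
begin

definition simple_graph :: "'a set \<Rightarrow> 'a set set \<Rightarrow> bool" where
  "simple_graph V E \<longleftrightarrow> finite V \<and> (\<forall>e\<in>E. e \<subseteq> V \<and> card e = 2)"

text \<open>A triangle of an edge set E, represented by its set of three edges.\<close>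
definition triangles :: "'a set set \<Rightarrow> 'a set set set" where
  "triangles E = {{{a,b},{b,c},{a,c}} | a b c.
      a \<noteq> b \<and> b \<noteq> c \<and> a \<noteq> c \<and> {a,b} \<in> E \<and> {b,c} \<in> E \<and> {a,c} \<in> E}"

definition triangle_free :: "'a set set \<Rightarrow> bool" where
  "triangle_free E \<longleftrightarrow> triangles E = {}"

definition tri_packing_num :: "'a set set \<Rightarrow> nat" where
  "tri_packing_num E = Max {card P | P. P \<subseteq> triangles E \<and>
      (\<forall>S\<in>P. \<forall>T\<in>P. S \<noteq> T \<longrightarrow> S \<inter> T = {})}"

definition tri_cover_num :: "'a set set \<Rightarrow> nat" where
  "tri_cover_num E = Min {card Y | Y. Y \<subseteq> E \<and> triangle_free (E - Y)}"

definition subgraph :: "'a set \<Rightarrow> 'a set set \<Rightarrow> 'a set \<Rightarrow> 'a set set \<Rightarrow> bool" where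
  "subgraph V' E' V E \<longleftrightarrow> V' \<subseteq> V \<and> E' \<subseteq> E \<and> (\<forall>e\<in>E'. e \<subseteq> V')"

definition proper_subgraph :: "'a set \<Rightarrow> 'a set set \<Rightarrow> 'a set \<Rightarrow> 'a set set \<Rightarrow> bool" where
  "proper_subgraph V' E' V E \<longleftrightarrow> subgraph V' E' V E \<and> (V', E') \<noteq> (V, E)"

definition nbhd :: "'a set set \<Rightarrow> 'a \<Rightarrow> 'a set" where
  "nbhd E v = {u. {u, v} \<in> E}"

definition induced_edges :: "'a set set \<Rightarrow> 'a set \<Rightarrow> 'a set set" where
  "induced_edges E S = {e \<in> E. e \<subseteq> S}"

definition connected_in :: "'a set \<Rightarrow> 'a set set \<Rightarrow> 'a \<Rightarrow> 'a \<Rightarrow> bool" where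
  "connected_in S F x y \<longleftrightarrow> x \<in> S \<and> y \<in> S \<and>
     (x, y) \<in> ({(u, w). {u, w} \<in> F \<and> u \<in> S \<and> w \<in> S})\<^sup>*"

definition component :: "'a set \<Rightarrow> 'a set set \<Rightarrow> 'a \<Rightarrow> 'a set" where
  "component S F x = {y. connected_in S F x y}"

definition robust :: "'a set \<Rightarrow> 'a set set \<Rightarrow> bool" where
  "robust V E \<longleftrightarrow> (\<forall>v\<in>V. \<forall>x\<in>nbhd E v.
      card (component (nbhd E v) (induced_edges E (nbhd E v)) x) \<ge> 5)"

end

theory Submission
  imports Defs
begin

text \<open>
  Call a nonempty edge set \<open>S\<close> reducible if it contains a family \<open>P\<close> of edge-disjoint triangles
  and some set \<open>X\<close> of at most \<open>2|P|\<close> edges meets every triangle using an edge of \<open>S\<close>. Then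
  \<open>\<tau>(G) \<le> \<tau>(G - S) + |X|\<close> and \<open>\<nu>(G) \<ge> \<nu>(G - S) + |P|\<close>, so a minimal counterexample, where
  \<open>\<tau>(G - S) \<le> 2\<nu>(G - S)\<close>, has no reducible edge set.

  A component \<open>C\<close> of the link \<open>G[N(v)]\<close> with at most four vertices always yields a reducible set
  through \<open>v\<close>: an isolated vertex \<open>x\<close> gives \<open>S = {vx}\<close> with \<open>P = X = {}\<close>; a vertex \<open>y\<close> whose only
  link neighbour is \<open>x\<close> gives the triangle \<open>vxy\<close> with \<open>X = {xy, vx}\<close>; an edge \<open>xy\<close> with
  \<open>C \<subseteq> {x, y, z}\<close> gives the triangle \<open>vxy\<close> with \<open>X = {xy, vz}\<close>. Otherwise \<open>C\<close> has four vertices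
  and minimum degree two, hence a perfect matching \<open>ab, cd\<close>, and the triangles \<open>vab, vcd\<close> with
  \<open>X = {ab, cd, va, vb}\<close> do the job.
\<close>

definition triangle_packing :: "'a set set \<Rightarrow> 'a set set set \<Rightarrow> bool" where
  "triangle_packing E P \<longleftrightarrow> P \<subseteq> triangles E \<and> (\<forall>S\<in>P. \<forall>T\<in>P. S \<noteq> T \<longrightarrow> S \<inter> T = {})"

definition minimal_counterexample :: "'a set \<Rightarrow> 'a set set \<Rightarrow> bool" where
  "minimal_counterexample V E \<longleftrightarrow> simple_graph V E \<and> 2 * tri_packing_num E < tri_cover_num E \<and>
    (\<forall>V' E'. proper_subgraph V' E' V E \<longrightarrow> tri_cover_num E' \<le> 2 * tri_packing_num E')"

lemma simple_graph_finite_edges: "simple_graph V E \<Longrightarrow> finite E"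
  unfolding simple_graph_def by (meson Pow_iff finite_Pow_iff rev_finite_subset subsetI)

lemma simple_graph_edge_neq: "simple_graph V E \<Longrightarrow> {a, b} \<in> E \<Longrightarrow> a \<noteq> b"
  unfolding simple_graph_def by fastforce

lemma triangleI:
  "\<lbrakk>a \<noteq> b; b \<noteq> c; a \<noteq> c; {a, b} \<in> E; {b, c} \<in> E; {a, c} \<in> E\<rbrakk>
    \<Longrightarrow> {{a, b}, {b, c}, {a, c}} \<in> triangles E"
  unfolding triangles_def by blast

lemma triangles_subset_edges: "T \<in> triangles E \<Longrightarrow> T \<subseteq> E"
  unfolding triangles_def by auto

lemma triangles_nonempty: "T \<in> triangles E \<Longrightarrow> T \<noteq> {}"
  unfolding triangles_def by auto

lemma triangles_restrict: "T \<in> triangles E \<Longrightarrow> T \<subseteq> F \<Longrightarrow> T \<in> triangles F"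
  unfolding triangles_def by auto

lemma finite_triangles: "finite E \<Longrightarrow> finite (triangles E)"
  by (meson finite_Pow_iff PowI rev_finite_subset subsetI triangles_subset_edges)

lemma finite_cover_sizes: "finite E \<Longrightarrow> finite {card Y | Y. Y \<subseteq> E \<and> triangle_free (E - Y)}"
  by (intro finite_image_set) simp

lemma tri_cover_num_attained:
  assumes "finite E"
  obtains Y where "Y \<subseteq> E" "triangle_free (E - Y)" "card Y = tri_cover_num E"
proof -
  let ?A = "{card Y | Y. Y \<subseteq> E \<and> triangle_free (E - Y)}"
  have "card E \<in> ?A" by (intro CollectI exI[of _ E]) (simp add: triangle_free_def triangles_def)
  then have "Min ?A \<in> ?A" using finite_cover_sizes[OF assms] by (intro Min_in) auto
  then show thesis using that unfolding tri_cover_num_def by auto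
qed

lemma tri_cover_num_le:
  assumes "finite E" "Y \<subseteq> E" "triangle_free (E - Y)"
  shows "tri_cover_num E \<le> card Y"
  unfolding tri_cover_num_def using finite_cover_sizes[OF assms(1)] assms(2,3)
  by (intro Min_le) blast+

lemma tri_packing_num_Max: "tri_packing_num E = Max {card P | P. triangle_packing E P}"
  unfolding tri_packing_num_def triangle_packing_def ..

lemma finite_packing_sizes:
  assumes "finite E"
  shows "finite {card P | P. triangle_packing E P}"
proof -
  have "{P. triangle_packing E P} \<subseteq> Pow (triangles E)"
    unfolding triangle_packing_def by blast
  then have "finite {P. triangle_packing E P}"
    using finite_triangles[OF assms] by (simp add: finite_subset)
  then show ?thesis by (rule finite_image_set)
qed

lemma tri_packing_num_attained:
  assumes "finite E"
  obtains P where "triangle_packing E P" "card P = tri_packing_num E"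
proof -
  let ?A = "{card P | P. triangle_packing E P}"
  have "card {} \<in> ?A" by (intro CollectI exI[of _ "{}"]) (simp add: triangle_packing_def)
  then have "Max ?A \<in> ?A" using finite_packing_sizes[OF assms] by (intro Max_in) auto
  then obtain P where "triangle_packing E P" "card P = Max ?A" by auto
  with that show thesis unfolding tri_packing_num_Max by blast
qed

lemma tri_packing_num_ge:
  assumes "finite E" "triangle_packing E P"
  shows "card P \<le> tri_packing_num E"
proof -
  have "card P \<in> {card P | P. triangle_packing E P}" using assms(2) by blast
  then show ?thesis unfolding tri_packing_num_Max by (rule Max_ge[OF finite_packing_sizes[OF assms(1)]])
qed

lemma finite_triangle_packing: "finite E \<Longrightarrow> triangle_packing E P \<Longrightarrow> finite P"
  unfolding triangle_packing_def by (metis finite_subset finite_triangles)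

lemma triangle_packing_singleton: "T \<in> triangles E \<Longrightarrow> triangle_packing E {T}"
  unfolding triangle_packing_def by simp

lemma triangle_packing_Un:
  assumes "triangle_packing E P" "triangle_packing E Q" "\<forall>S\<in>P. \<forall>T\<in>Q. S \<inter> T = {}"
  shows "triangle_packing E (P \<union> Q)"
proof -
  have "S \<inter> T = {}" if "S \<in> P \<union> Q" "T \<in> P \<union> Q" "S \<noteq> T" for S T
    using that assms unfolding triangle_packing_def by (metis Int_commute Un_iff)
  then show ?thesis using assms(1,2) unfolding triangle_packing_def by auto
qed

lemma triangle_packing_mono:
  assumes "triangle_packing E' P" "E' \<subseteq> E"
  shows "triangle_packing E P"
proof -
  have "T \<in> triangles E" if "T \<in> P" for T
  proof -
    from that assms(1) have T: "T \<in> triangles E'" unfolding triangle_packing_def by blast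
    then show ?thesis
      by (rule triangles_restrict) (use triangles_subset_edges[OF T] assms(2) in blast)
  qed
  then show ?thesis using assms(1) unfolding triangle_packing_def by blast
qed

lemma tri_cover_num_Diff_le:
  assumes "finite E" "X \<subseteq> E" and hit: "\<forall>T\<in>triangles E. T \<inter> S \<noteq> {} \<longrightarrow> T \<inter> X \<noteq> {}"
  shows "tri_cover_num E \<le> tri_cover_num (E - S) + card X"
proof -
  obtain Y where Y: "Y \<subseteq> E - S" "triangle_free (E - S - Y)" "card Y = tri_cover_num (E - S)"
    using tri_cover_num_attained[of "E - S"] assms(1) by blast
  have "triangle_free (E - (Y \<union> X))"
    unfolding triangle_free_def
  proof (rule equals0I)
    fix T assume T: "T \<in> triangles (E - (Y \<union> X))"
    then have "T \<subseteq> E - (Y \<union> X)" by (rule triangles_subset_edges)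
    moreover have "T \<in> triangles E" using T calculation triangles_restrict by blast
    ultimately have "T \<subseteq> E - S - Y" using hit by blast
    with T have "T \<in> triangles (E - S - Y)" by (rule triangles_restrict)
    then show False using Y(2) unfolding triangle_free_def by blast
  qed
  then have "tri_cover_num E \<le> card (Y \<union> X)"
    using Y(1) assms(1,2) by (intro tri_cover_num_le) auto
  also have "\<dots> \<le> card Y + card X" by (rule card_Un_le)
  finally show ?thesis using Y(3) by simp
qed

lemma tri_packing_num_Diff_add_le:
  assumes "finite E" "triangle_packing E P" "\<forall>T\<in>P. T \<subseteq> S"
  shows "tri_packing_num (E - S) + card P \<le> tri_packing_num E"
proof -
  obtain Q where Q: "triangle_packing (E - S) Q" "card Q = tri_packing_num (E - S)"
    using tri_packing_num_attained[of "E - S"] assms(1) by blast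
  have "T \<subseteq> E - S" if "T \<in> Q" for T
    using Q(1) that by (auto simp: triangle_packing_def dest: triangles_subset_edges)
  then have disjoint: "\<forall>T\<in>Q. \<forall>T'\<in>P. T \<inter> T' = {}" using assms(3) by blast
  have "Q \<inter> P = {}"
  proof (rule equals0I)
    fix T assume "T \<in> Q \<inter> P"
    then have "T \<inter> T = {}" "T \<in> triangles E" using disjoint assms(2) by (auto simp: triangle_packing_def)
    then show False using triangles_nonempty by blast
  qed
  then have "card (Q \<union> P) = card Q + card P"
    using finite_triangle_packing[OF _ Q(1)] finite_triangle_packing[OF assms(1,2)] assms(1)
    by (simp add: card_Un_disjoint)
  moreover have "triangle_packing E (Q \<union> P)"
    using triangle_packing_mono[OF Q(1) Diff_subset] assms(2) disjoint by (rule triangle_packing_Un)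
  then have "card (Q \<union> P) \<le> tri_packing_num E" by (rule tri_packing_num_ge[OF assms(1)])
  ultimately show ?thesis using Q(2) by simp
qed

definition reducible :: "'a set set \<Rightarrow> 'a set set \<Rightarrow> bool" where
  "reducible E S \<longleftrightarrow> S \<subseteq> E \<and> S \<noteq> {} \<and>
    (\<exists>P X. triangle_packing E P \<and> (\<forall>T\<in>P. T \<subseteq> S) \<and> X \<subseteq> E \<and> card X \<le> 2 * card P \<and>
      (\<forall>T\<in>triangles E. T \<inter> S \<noteq> {} \<longrightarrow> T \<inter> X \<noteq> {}))"

lemma minimal_counterexample_not_reducible:
  assumes "minimal_counterexample V E"
  shows "\<not> reducible E S"
proof
  assume "reducible E S"
  then obtain P X where S: "S \<subseteq> E" "S \<noteq> {}"
    and P: "triangle_packing E P" "\<forall>T\<in>P. T \<subseteq> S"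
    and X: "X \<subseteq> E" "card X \<le> 2 * card P" "\<forall>T\<in>triangles E. T \<inter> S \<noteq> {} \<longrightarrow> T \<inter> X \<noteq> {}"
    unfolding reducible_def by auto
  have graph: "simple_graph V E" and counterexample: "2 * tri_packing_num E < tri_cover_num E"
    using assms unfolding minimal_counterexample_def by blast+
  have "finite E" using graph by (rule simple_graph_finite_edges)
  have "\<forall>e\<in>E. e \<subseteq> V" using graph unfolding simple_graph_def by blast
  moreover have "E - S \<noteq> E" using S by blast
  ultimately have "proper_subgraph V (E - S) V E" unfolding proper_subgraph_def subgraph_def by blast
  then have "tri_cover_num (E - S) \<le> 2 * tri_packing_num (E - S)"
    using assms unfolding minimal_counterexample_def by blast
  moreover have "tri_cover_num E \<le> tri_cover_num (E - S) + card X"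
    using \<open>finite E\<close> X(1,3) by (rule tri_cover_num_Diff_le)
  moreover have "tri_packing_num (E - S) + card P \<le> tri_packing_num E"
    using \<open>finite E\<close> P by (rule tri_packing_num_Diff_add_le)
  ultimately show False using counterexample X(2) by linarith
qed

lemma reducibleI:
  assumes "S \<subseteq> E" "S \<noteq> {}" "triangle_packing E P" "\<forall>T\<in>P. T \<subseteq> S" "X \<subseteq> E" "card X \<le> 2 * card P"
    and hit: "\<And>p q w. \<lbrakk>{p, q} \<in> S; {p, w} \<in> E; {q, w} \<in> E; p \<noteq> q; w \<noteq> p; w \<noteq> q\<rbrakk>
      \<Longrightarrow> {p, q} \<in> X \<or> {q, w} \<in> X \<or> {p, w} \<in> X"
  shows "reducible E S"
proof -
  have "T \<inter> X \<noteq> {}" if triangle: "T \<in> triangles E" and through_S: "T \<inter> S \<noteq> {}" for T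
  proof -
    obtain a b c where T: "T = {{a, b}, {b, c}, {a, c}}" "a \<noteq> b" "b \<noteq> c" "a \<noteq> c"
      and E: "{a, b} \<in> E" "{b, c} \<in> E" "{a, c} \<in> E"
      using triangle unfolding triangles_def by blast
    have swap: "{b, a} = {a, b}" "{c, b} = {b, c}" "{c, a} = {a, c}" by auto
    consider "{a, b} \<in> S" | "{b, c} \<in> S" | "{a, c} \<in> S" using through_S T(1) by blast
    then show ?thesis
    proof cases
      case 1 with hit[of a b c] show ?thesis using T E swap by auto
    next
      case 2 with hit[of b c a] show ?thesis using T E swap by auto
    next
      case 3 with hit[of a c b] show ?thesis using T E swap by auto
    qed
  qed
  then show ?thesis using assms(1-6) unfolding reducible_def by blast
qed

lemma mem_nbhd_iff: "u \<in> nbhd E v \<longleftrightarrow> {v, u} \<in> E"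
  unfolding nbhd_def by (simp add: insert_commute)

lemma common_nbhd_of_edge:
  "{p, q} = {v, t} \<Longrightarrow> {p, w} \<in> E \<Longrightarrow> {q, w} \<in> E \<Longrightarrow> w \<in> nbhd E v \<inter> nbhd E t"
  unfolding nbhd_def by (auto simp: doubleton_eq_iff insert_commute)

lemma reducible_apexI:
  assumes A: "A \<subseteq> nbhd E v" "A \<noteq> {}" and M: "M \<subseteq> X"
    and P: "triangle_packing E P" "\<forall>T\<in>P. T \<subseteq> (\<lambda>t. {v, t}) ` A \<union> M"
    and X: "X \<subseteq> E" "card X \<le> 2 * card P"
    and hit: "\<And>t w. \<lbrakk>t \<in> A; w \<in> nbhd E v \<inter> nbhd E t; w \<noteq> t\<rbrakk>
      \<Longrightarrow> {v, t} \<in> X \<or> {v, w} \<in> X \<or> {t, w} \<in> X"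
  shows "reducible E ((\<lambda>t. {v, t}) ` A \<union> M)"
proof (rule reducibleI[OF _ _ P X])
  show "(\<lambda>t. {v, t}) ` A \<union> M \<subseteq> E" using A(1) M X(1) by (auto simp: mem_nbhd_iff)
  show "(\<lambda>t. {v, t}) ` A \<union> M \<noteq> {}" using A(2) by blast
next
  fix p q w assume pq: "{p, q} \<in> (\<lambda>t. {v, t}) ` A \<union> M" "{p, w} \<in> E" "{q, w} \<in> E" "p \<noteq> q"
    "w \<noteq> p" "w \<noteq> q"
  show "{p, q} \<in> X \<or> {q, w} \<in> X \<or> {p, w} \<in> X"
  proof (cases "{p, q} \<in> M")
    case True
    with M show ?thesis by blast
  next
    case False
    then obtain t where t: "t \<in> A" "{p, q} = {v, t}" using pq(1) by blast
    have "w \<in> nbhd E v \<inter> nbhd E t" using t(2) pq(2,3) by (rule common_nbhd_of_edge)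
    moreover have "w \<noteq> t" using t(2) pq(5,6) by (auto simp: doubleton_eq_iff)
    ultimately have "{v, t} \<in> X \<or> {v, w} \<in> X \<or> {t, w} \<in> X" using hit t(1) by blast
    then show ?thesis using t(2) by (auto simp: doubleton_eq_iff insert_commute)
  qed
qed

lemma reducible_link_isolated_vertex:
  assumes "x \<in> nbhd E v" "nbhd E v \<inter> nbhd E x = {}"
  shows "reducible E {{v, x}}"
proof -
  have "reducible E ((\<lambda>t. {v, t}) ` {x} \<union> {})"
    by (rule reducible_apexI[where P = "{}" and X = "{}"])
       (use assms in \<open>auto simp: triangle_packing_def\<close>)
  then show ?thesis by simp
qed

lemma link_edge_triangle:
  assumes "simple_graph V E" "x \<in> nbhd E v" "y \<in> nbhd E v" "{x, y} \<in> E"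
  shows "{{v, x}, {x, y}, {v, y}} \<in> triangles E"
proof -
  have "{v, x} \<in> E" "{v, y} \<in> E" using assms(2,3) by (simp_all add: mem_nbhd_iff)
  with assms show ?thesis by (intro triangleI) (auto dest: simple_graph_edge_neq)
qed

lemma reducible_link_leaf:
  assumes "simple_graph V E" "x \<in> nbhd E v" "y \<in> nbhd E v" "{x, y} \<in> E"
    and leaf: "nbhd E v \<inter> nbhd E y \<subseteq> {x}"
  shows "reducible E ((\<lambda>t. {v, t}) ` {x, y} \<union> {{x, y}})"
proof (rule reducible_apexI[where P = "{{{v, x}, {x, y}, {v, y}}}" and X = "{{x, y}, {v, x}}"])
  have "{{v, x}, {x, y}, {v, y}} \<in> triangles E" using assms(1-4) by (rule link_edge_triangle)
  then show "triangle_packing E {{{v, x}, {x, y}, {v, y}}}" by (rule triangle_packing_singleton)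
  show "{{x, y}, {v, x}} \<subseteq> E" using assms(2,4) by (simp add: mem_nbhd_iff)
  show "card {{x, y}, {v, x}} \<le> 2 * card {{{v, x}, {x, y}, {v, y}}}" by (simp add: card_insert_if)
next
  fix t w assume "t \<in> {x, y}" "w \<in> nbhd E v \<inter> nbhd E t"
  then show "{v, t} \<in> {{x, y}, {v, x}} \<or> {v, w} \<in> {{x, y}, {v, x}} \<or> {t, w} \<in> {{x, y}, {v, x}}"
    using leaf by blast
qed (use assms(2,3) in auto)

lemma reducible_link_small_part:
  assumes "simple_graph V E" "x \<in> nbhd E v" "y \<in> nbhd E v" "z \<in> nbhd E v" "{x, y} \<in> E"
    and closed: "nbhd E v \<inter> (nbhd E x \<union> nbhd E y) \<subseteq> {x, y, z}"
  shows "reducible E ((\<lambda>t. {v, t}) ` {x, y} \<union> {{x, y}})"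
proof (rule reducible_apexI[where P = "{{{v, x}, {x, y}, {v, y}}}" and X = "{{x, y}, {v, z}}"])
  have "{{v, x}, {x, y}, {v, y}} \<in> triangles E" using assms(1-3,5) by (rule link_edge_triangle)
  then show "triangle_packing E {{{v, x}, {x, y}, {v, y}}}" by (rule triangle_packing_singleton)
  show "{{x, y}, {v, z}} \<subseteq> E" using assms(4,5) by (simp add: mem_nbhd_iff)
  show "card {{x, y}, {v, z}} \<le> 2 * card {{{v, x}, {x, y}, {v, y}}}" by (simp add: card_insert_if)
next
  fix t w assume "t \<in> {x, y}" "w \<in> nbhd E v \<inter> nbhd E t" "w \<noteq> t"
  moreover from this have "w \<in> {x, y, z}" using closed by blast
  ultimately show "{v, t} \<in> {{x, y}, {v, z}} \<or> {v, w} \<in> {{x, y}, {v, z}} \<or> {t, w} \<in> {{x, y}, {v, z}}"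
    by (auto simp: insert_commute)
qed (use assms(2,3) in auto)

lemma reducible_link_matching:
  assumes "simple_graph V E" and C: "C = {a, b, c, d}" "C \<subseteq> nbhd E v" "distinct [a, b, c, d]"
    and "{a, b} \<in> E" "{c, d} \<in> E"
    and closed: "\<forall>t\<in>C. nbhd E v \<inter> nbhd E t \<subseteq> C"
  shows "reducible E ((\<lambda>t. {v, t}) ` C \<union> {{a, b}, {c, d}})"
proof -
  let ?Tab = "{{v, a}, {a, b}, {v, b}}" and ?Tcd = "{{v, c}, {c, d}, {v, d}}"
  let ?X = "{{a, b}, {c, d}, {v, a}, {v, b}}"
  have Tab: "?Tab \<in> triangles E" and Tcd: "?Tcd \<in> triangles E"
    using assms(1,5,6) C(1,2) by (auto intro!: link_edge_triangle)
  have "v \<notin> nbhd E v" using simple_graph_edge_neq[OF assms(1), of v v] by (auto simp: mem_nbhd_iff)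
  with C have "a \<notin> {v, c, d}" "b \<notin> {v, c, d}" by auto
  moreover have "\<forall>e\<in>?Tab. a \<in> e \<or> b \<in> e" "\<forall>e\<in>?Tcd. e \<subseteq> {v, c, d}" by auto
  ultimately have disjoint: "?Tab \<inter> ?Tcd = {}" by blast
  then have "?Tab \<noteq> ?Tcd" by (metis Int_absorb insert_not_empty)
  have "\<forall>S\<in>{?Tab}. \<forall>T\<in>{?Tcd}. S \<inter> T = {}" using disjoint by blast
  then have "triangle_packing E ({?Tab} \<union> {?Tcd})"
    by (rule triangle_packing_Un[OF triangle_packing_singleton[OF Tab] triangle_packing_singleton[OF Tcd]])
  then have packing: "triangle_packing E {?Tab, ?Tcd}" by (simp only: Un_insert_left Un_empty_left)
  show ?thesis
  proof (rule reducible_apexI[OF C(2) _ _ packing])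
    show "card ?X \<le> 2 * card {?Tab, ?Tcd}"
      using card_length[of "[{a, b}, {c, d}, {v, a}, {v, b}]"] \<open>?Tab \<noteq> ?Tcd\<close> by simp
    show "?X \<subseteq> E" using assms(5,6) C(1,2) by (auto simp: mem_nbhd_iff)
    show "C \<noteq> {}" "{{a, b}, {c, d}} \<subseteq> ?X" using C(1) by auto
    show "\<forall>T\<in>{?Tab, ?Tcd}. T \<subseteq> (\<lambda>t. {v, t}) ` C \<union> {{a, b}, {c, d}}" using C(1) by blast
  next
    fix t w assume t: "t \<in> C" and w: "w \<in> nbhd E v \<inter> nbhd E t" "w \<noteq> t"
    have X: "{v, a} \<in> ?X" "{v, b} \<in> ?X" by simp_all
    from t w have "w \<in> C" using closed by blast
    then consider "t \<in> {a, b}" | "w \<in> {a, b}" | "t \<in> {c, d}" "w \<in> {c, d}" using t C(1) by blast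
    then show "{v, t} \<in> ?X \<or> {v, w} \<in> ?X \<or> {t, w} \<in> ?X"
    proof cases
      case 1
      then have "t = a \<or> t = b" by simp
      then show ?thesis using X by (elim disjE) simp_all
    next
      case 2
      then have "w = a \<or> w = b" by simp
      then show ?thesis using X by (elim disjE) simp_all
    next
      case 3
      then have "{t, w} = {c, d}" using w(2) by auto
      then show ?thesis by simp
    qed
  qed
qed

lemma four_point_perfect_matching:
  fixes R :: "'a \<Rightarrow> 'a \<Rightarrow> bool"
  assumes sym: "\<And>u w. R u w \<Longrightarrow> R w u" and irrefl: "\<And>u. \<not> R u u"
    and deg: "\<And>u. u \<in> {a, b, c, d} \<Longrightarrow> \<exists>w1\<in>{a, b, c, d}. \<exists>w2\<in>{a, b, c, d}. w1 \<noteq> w2 \<and> R u w1 \<and> R u w2"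
  shows "(R a b \<and> R c d) \<or> (R a c \<and> R b d) \<or> (R a d \<and> R b c)"
proof -
  have "\<not> R a b \<Longrightarrow> R a c \<and> R a d" using deg[of a] irrefl[of a] by auto
  moreover have "\<not> R b a \<Longrightarrow> R b c \<and> R b d" using deg[of b] irrefl[of b] by auto
  moreover have "\<not> R c d \<Longrightarrow> R c a \<and> R c b" using deg[of c] irrefl[of c] by auto
  moreover have "\<not> R d c \<Longrightarrow> R d a \<and> R d b" using deg[of d] irrefl[of d] by auto
  ultimately show ?thesis using sym by blast
qed

lemma component_subset: "component S F x \<subseteq> S"
  unfolding component_def connected_in_def by blast

lemma mem_component_self: "x \<in> S \<Longrightarrow> x \<in> component S F x"
  unfolding component_def connected_in_def by simp

lemma component_closed:
  assumes "y \<in> component S F x" "w \<in> S" "{y, w} \<in> F"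
  shows "w \<in> component S F x"
proof -
  let ?R = "{(u, w). {u, w} \<in> F \<and> u \<in> S \<and> w \<in> S}"
  have "x \<in> S" "y \<in> S" "(x, y) \<in> ?R\<^sup>*"
    using assms(1) unfolding component_def connected_in_def by auto
  moreover have "(y, w) \<in> ?R" using \<open>y \<in> S\<close> assms(2,3) by simp
  ultimately show ?thesis unfolding component_def connected_in_def
    using assms(2) by (simp add: rtrancl_into_rtrancl)
qed

abbreviation link_component :: "'a set set \<Rightarrow> 'a \<Rightarrow> 'a \<Rightarrow> 'a set" where
  "link_component E v x \<equiv> component (nbhd E v) (induced_edges E (nbhd E v)) x"

lemma link_component_closed:
  assumes "u \<in> link_component E v x"
  shows "nbhd E v \<inter> nbhd E u \<subseteq> link_component E v x"
proof
  fix w assume w: "w \<in> nbhd E v \<inter> nbhd E u"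
  have "u \<in> nbhd E v" using assms by (rule subsetD[OF component_subset])
  with w have "{u, w} \<in> induced_edges E (nbhd E v)"
    unfolding induced_edges_def by (auto simp: mem_nbhd_iff)
  with w show "w \<in> link_component E v x" by (intro component_closed[OF assms]) auto
qed

lemma finite_link_component: "simple_graph V E \<Longrightarrow> finite (link_component E v x)"
  using component_subset[of "nbhd E v"] unfolding simple_graph_def nbhd_def
  by (metis (no_types, lifting) insert_subset mem_Collect_eq rev_finite_subset subsetI subset_trans)

lemma irreducible_link_two_neighbours:
  assumes "simple_graph V E" and irreducible: "\<And>S. \<not> reducible E S" and "u \<in> nbhd E v"
  obtains w1 w2 where "w1 \<noteq> w2" "w1 \<in> nbhd E v \<inter> nbhd E u" "w2 \<in> nbhd E v \<inter> nbhd E u"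
proof -
  obtain w1 where w1: "w1 \<in> nbhd E v \<inter> nbhd E u"
    using reducible_link_isolated_vertex[OF assms(3)] irreducible by blast
  then have "{w1, u} \<in> E" by (simp add: nbhd_def)
  then have "\<not> nbhd E v \<inter> nbhd E u \<subseteq> {w1}"
    using reducible_link_leaf[OF assms(1) _ assms(3)] w1 irreducible by blast
  with w1 that show ?thesis by blast
qed

lemma card_le_3_obtain_triple:
  assumes "finite C" "card C \<le> 3" "x \<in> C" "y \<in> C" "x \<noteq> y"
  obtains z where "z \<in> C" "C \<subseteq> {x, y, z}"
proof (cases "C \<subseteq> {x, y}")
  case True
  with assms(3) that show ?thesis by blast
next
  case False
  then obtain z where z: "z \<in> C" "z \<notin> {x, y}" by blast
  have "{x, y, z} \<subseteq> C" using assms(3,4) z(1) by blast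
  moreover have "card {x, y, z} = 3" using assms(5) z(2) by (auto simp: card_insert_if)
  ultimately have "{x, y, z} = C" using assms(1,2) by (simp add: card_seteq)
  with z(1) that show ?thesis by blast
qed

lemma irreducible_link_component_card_gt_3:
  assumes graph: "simple_graph V E" and irreducible: "\<And>S. \<not> reducible E S" and x: "x \<in> nbhd E v"
  shows "3 < card (link_component E v x)"
proof (rule ccontr)
  let ?C = "link_component E v x"
  assume "\<not> 3 < card ?C"
  obtain y where y: "y \<in> nbhd E v" "y \<in> nbhd E x"
    using irreducible_link_two_neighbours[OF graph irreducible x] by blast
  have xC: "x \<in> ?C" using x by (rule mem_component_self)
  have yC: "y \<in> ?C" using link_component_closed[OF xC] y by blast
  have xy: "{x, y} \<in> E" using y(2) by (simp add: nbhd_def insert_commute)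
  with graph have "x \<noteq> y" by (rule simple_graph_edge_neq)
  moreover have "card ?C \<le> 3" using \<open>\<not> 3 < card ?C\<close> by simp
  ultimately obtain z where z: "z \<in> ?C" "?C \<subseteq> {x, y, z}"
    using card_le_3_obtain_triple[OF finite_link_component[OF graph] _ xC yC] by blast
  have "nbhd E v \<inter> (nbhd E x \<union> nbhd E y) \<subseteq> {x, y, z}"
    using link_component_closed[OF xC] link_component_closed[OF yC] z(2) by blast
  moreover have "z \<in> nbhd E v" using z(1) by (rule subsetD[OF component_subset])
  ultimately have "reducible E ((\<lambda>t. {v, t}) ` {x, y} \<union> {{x, y}})"
    using reducible_link_small_part[OF graph x y(1) _ xy] by blast
  with irreducible show False by blast
qed

lemma irreducible_link_component_card_ne_4:
  assumes graph: "simple_graph V E" and irreducible: "\<And>S. \<not> reducible E S" and x: "x \<in> nbhd E v"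
  shows "card (link_component E v x) \<noteq> 4"
proof
  let ?C = "link_component E v x"
  assume "card ?C = 4"
  have xC: "x \<in> ?C" using x by (rule mem_component_self)
  have "card (?C - {x}) = 3" using \<open>card ?C = 4\<close> xC finite_link_component[OF graph] by simp
  then obtain p q r where pqr: "?C - {x} = {p, q, r}" "p \<noteq> q" "q \<noteq> r" "p \<noteq> r"
    unfolding card_3_iff by blast
  have C: "?C = {x, p, q, r}" using pqr(1) xC by blast
  have distinct: "distinct [x, p, q, r]" using pqr by auto
  have CN: "?C \<subseteq> nbhd E v" by (rule component_subset)
  have closed: "\<forall>t\<in>?C. nbhd E v \<inter> nbhd E t \<subseteq> ?C" by (intro ballI link_component_closed)
  have degree: "\<exists>w1\<in>?C. \<exists>w2\<in>?C. w1 \<noteq> w2 \<and> {u, w1} \<in> E \<and> {u, w2} \<in> E" if u: "u \<in> ?C" for u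
  proof -
    obtain w1 w2 where w: "w1 \<noteq> w2" "w1 \<in> nbhd E v \<inter> nbhd E u" "w2 \<in> nbhd E v \<inter> nbhd E u"
      using irreducible_link_two_neighbours[OF graph irreducible subsetD[OF CN u]] by blast
    moreover have "w1 \<in> ?C" "w2 \<in> ?C" using w(2,3) closed u by blast+
    moreover have "{u, w1} \<in> E" "{u, w2} \<in> E" using w(2,3) by (simp_all add: mem_nbhd_iff)
    ultimately show ?thesis by blast
  qed
  have "({x, p} \<in> E \<and> {q, r} \<in> E) \<or> ({x, q} \<in> E \<and> {p, r} \<in> E) \<or> ({x, r} \<in> E \<and> {p, q} \<in> E)"
  proof (rule four_point_perfect_matching[where R = "\<lambda>u w. {u, w} \<in> E"])
    show "\<And>u w. {u, w} \<in> E \<Longrightarrow> {w, u} \<in> E" by (simp add: insert_commute)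
    show "\<And>u. {u, u} \<notin> E" using simple_graph_edge_neq[OF graph] by blast
    show "\<And>u. u \<in> {x, p, q, r} \<Longrightarrow> \<exists>w1\<in>{x, p, q, r}. \<exists>w2\<in>{x, p, q, r}. w1 \<noteq> w2 \<and> {u, w1} \<in> E \<and> {u, w2} \<in> E"
      using degree unfolding C .
  qed
  moreover have "\<not> ({a, b} \<in> E \<and> {c, d} \<in> E)" if "?C = {a, b, c, d}" "distinct [a, b, c, d]" for a b c d
    using reducible_link_matching[OF graph that(1) CN that(2) _ _ closed] irreducible by blast
  moreover have "?C = {x, q, p, r}" "?C = {x, r, p, q}" using C by auto
  moreover have "distinct [x, q, p, r]" "distinct [x, r, p, q]" using distinct by auto
  ultimately show False using C distinct by blast
qed

theorem lemma2p6:
  fixes V :: "'a set" and E :: "'a set set"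
  assumes "simple_graph V E"
    and "tri_cover_num E > 2 * tri_packing_num E"
    and "\<And>V' E'. proper_subgraph V' E' V E \<Longrightarrow> tri_cover_num E' \<le> 2 * tri_packing_num E'"
  shows "robust V E"
proof -
  have "minimal_counterexample V E" using assms unfolding minimal_counterexample_def by blast
  then have irreducible: "\<And>S. \<not> reducible E S" by (rule minimal_counterexample_not_reducible)
  have "5 \<le> card (link_component E v x)" if "x \<in> nbhd E v" for v x
    using irreducible_link_component_card_gt_3[OF assms(1) irreducible that]
      irreducible_link_component_card_ne_4[OF assms(1) irreducible that] by linarith
  then show ?thesis unfolding robust_def by blast
qed

end
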